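(* Consider the repeated newsvendor with horizon $T$, action space $\mathcal{X}=[0,B]$ and demand space $[0,B]$. At each round $t$ the learner chooses $X_t\in[0,B]$, a latent demand $D_t\in[0,B]$ is realized, and the learner observes only $O_t=\psi(X_t,D_t):=(\min\{D_t,X_t\},\mathbf{1}\{D_t\le X_t\})$. The history is $H_t=((X_s,O_s))_{s=1}^t$, $H_0=\emptyset$. The loss is $\ell(x,d)=h(x-d)_++b(d-x)_+$ with $h,b>0$, and $\gamma=b/(b+h)$. The environment $\mathbb{P}^\star$ is a distribution over complete demand trajectories $D_{1:T}$; let $f^\star(x):=\mathbb{E}_{\mathbb{P}^\star}[\ell(x,D_t)]$ (assumed not to depend on $t$), $x^\star\in\arg\min_{x\in[0,B]}f^\star(x)$, $r_t:=f^\star(X_t)-f^\star(x^\star)$, and for a policy $\pi$ let $\mathrm{BReg}_T(\pi;\mathbb{P}^\star):=\mathbb{E}_{\mathbb{P}^\star_\pi}[\sum_{t=1}^T r_t]$, where $\mathbb{P}^\star_\pi$ is the law of the interaction generated by $\pi$ in $\mathbb{P}^\star$. For $t\in[T]$ and a history value $h$, let $Q_t^\star(\cdot\mid h)$ be the conditional law under $\mathbb{P}^\star$ of $D_{1:T}$ given $H_{t-1}=h$, and let $Q_{t,\theta}(\cdot\mid h)$ be a learned probability kernel on $[0,B]^T$. For a completed trajectory $d_{1:T}$ let $\hat x(d_{1:T})=\inf\{x:\frac1T\sum_{s=1}^T\mathbf{1}\{d_s\le x\}\ge\gamma\}$ (the left empirical $\gamma$-quantile, an empirical risk minimizer of $x\mapsto\frac1T\sum_s\ell(x,d_s)$).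 The ideal policy $\pi_\star$ at each round $t$ samples $\widetilde D^{(t)}_{1:T}\sim Q_t^\star(\cdot\mid H_{t-1})$ and plays $X_t=\hat x(\widetilde D^{(t)}_{1:T})$; the deployed policy $\pi_\theta$ does the same with $Q_{t,\theta}(\cdot\mid H_{t-1})$ in place of $Q_t^\star$. Define the on-policy completion mismatch $$\Delta_T^{\mathrm{comp}}(\theta;\pi_\theta):=\sum_{t=1}^T\mathbb{E}_{H_{t-1}\sim\mathbb{P}^\star_{\pi_\theta}}\Big[\mathrm{KL}\big(Q_t^\star(\cdot\mid H_{t-1})\,\|\,Q_{t,\theta}(\cdot\mid H_{t-1})\big)\Big].$$ Assume: (i) there is $V_{\mathrm{comp}}\in[1,\infty)$ such that for all $t\in[T]$ and all histories $h$, $Q_{t,\theta}(\cdot\mid h)\ll Q_t^\star(\cdot\mid h)$ and $\sup_F Q_{t,\theta}(F\mid h)/Q_t^\star(F\mid h)\le V_{\mathrm{comp}}$, the supremum over measurable sets $F\subseteq[0,B]^T$; (ii) under the interaction law of $\pi_\star$ in $\mathbb{P}^\star$, $\mathbb{E}[r_t\mid H_{t-1}]=\mathbb{E}[r_t]$ almost surely for every $t$; (iii) $B'>0$ is such that $\sup r_t-\inf r_t\le B'$ almost surely. Then $$\mathrm{BReg}_T(\pi_\theta;\mathbb{P}^\star)\le\mathrm{BReg}_T(\pi_\star;\mathbb{P}^\star)+B'\sqrt{\frac{T(2+\log V_{\mathrm{comp}})}{2}\,\Delta_T^{\mathrm{comp}}(\theta;\pi_\theta)}.$$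
   Context: $(a)_+=\max\{a,0\}$. KL denotes Kullback–Leibler divergence. The conditional-mean assumption (ii) is stated in the paper as $\mathbb{E}_{\mathbb{P}^\star}[r_t\mid H_{t-1}]=\mathbb{E}_{\mathbb{P}^\star}[r_t]$ a.s.; its proof uses it under the interaction law of the ideal policy. *)

theory Defs
  imports "HOL-Probability.Probability"
begin

text \<open>Repeated newsvendor with censored demand. Rounds are indexed 1..T.
  Demand trajectories and action sequences are extensional functions on {1..T}.\<close>

definition loss :: "real \<Rightarrow> real \<Rightarrow> real \<Rightarrow> real \<Rightarrow> real" where
  "loss hc bc x d = hc * max (x - d) 0 + bc * max (d - x) 0"

definition psi :: "real \<Rightarrow> real \<Rightarrow> real \<times> bool" where
  "psi x d = (min d x, d \<le> x)"

definition Dsp :: "nat \<Rightarrow> real \<Rightarrow> (nat \<Rightarrow> real) measure" where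
  "Dsp T B = (\<Pi>\<^sub>M s\<in>{1..T}. restrict_space borel {0..B})"

definition Xsp :: "nat \<Rightarrow> (nat \<Rightarrow> real) measure" where
  "Xsp T = (\<Pi>\<^sub>M s\<in>{1..T}. (borel :: real measure))"

text \<open>Space of history values H_{t-1} = ((X_s,O_s))_{s=1}^{t-1}.\<close>
definition Hsp :: "nat \<Rightarrow> (nat \<Rightarrow> real \<times> real \<times> bool) measure" where
  "Hsp t = (\<Pi>\<^sub>M s\<in>{1..<t}. (borel :: real measure) \<Otimes>\<^sub>M ((borel :: real measure) \<Otimes>\<^sub>M count_space UNIV))"

definition hist :: "nat \<Rightarrow> (nat \<Rightarrow> real) \<Rightarrow> (nat \<Rightarrow> real) \<Rightarrow> (nat \<Rightarrow> real \<times> real \<times> bool)" where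
  "hist t d xs = (\<lambda>s\<in>{1..<t}. (xs s, psi (xs s) (d s)))"

definition Hmap :: "nat \<Rightarrow> (nat \<Rightarrow> real) \<times> (nat \<Rightarrow> real) \<Rightarrow> (nat \<Rightarrow> real \<times> real \<times> bool)" where
  "Hmap t \<omega> = hist t (fst \<omega>) (snd \<omega>)"

definition xhat :: "nat \<Rightarrow> real \<Rightarrow> (nat \<Rightarrow> real) \<Rightarrow> real" where
  "xhat T gam d = Inf {x. gam \<le> real (card {s\<in>{1..T}. d s \<le> x}) / real T}"

definition act :: "nat \<Rightarrow> real \<Rightarrow> (nat \<Rightarrow> (nat \<Rightarrow> real \<times> real \<times> bool) \<Rightarrow> (nat \<Rightarrow> real) measure)
    \<Rightarrow> nat \<Rightarrow> (nat \<Rightarrow> real \<times> real \<times> bool) \<Rightarrow> real measure" where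
  "act T gam Q t h = distr (Q t h) borel (xhat T gam)"

text \<open>Joint law of (D_{1:T}, X_{1:T}) after k rounds of interaction, D ~ P.
  Not yet played actions are set to 0.\<close>
primrec ilaw :: "nat \<Rightarrow> real \<Rightarrow> real \<Rightarrow> (nat \<Rightarrow> real) measure
    \<Rightarrow> (nat \<Rightarrow> (nat \<Rightarrow> real \<times> real \<times> bool) \<Rightarrow> (nat \<Rightarrow> real) measure)
    \<Rightarrow> nat \<Rightarrow> ((nat \<Rightarrow> real) \<times> (nat \<Rightarrow> real)) measure" where
  "ilaw T B gam P Q 0 = distr P (Dsp T B \<Otimes>\<^sub>M Xsp T) (\<lambda>d. (d, \<lambda>s\<in>{1..T}. 0))"
| "ilaw T B gam P Q (Suc k) = ilaw T B gam P Q k \<bind>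
     (\<lambda>\<omega>. distr (act T gam Q (Suc k) (Hmap (Suc k) \<omega>)) (Dsp T B \<Otimes>\<^sub>M Xsp T)
              (\<lambda>x. (fst \<omega>, (snd \<omega>)(Suc k := x))))"

definition interaction :: "nat \<Rightarrow> real \<Rightarrow> real \<Rightarrow> (nat \<Rightarrow> real) measure
    \<Rightarrow> (nat \<Rightarrow> (nat \<Rightarrow> real \<times> real \<times> bool) \<Rightarrow> (nat \<Rightarrow> real) measure)
    \<Rightarrow> ((nat \<Rightarrow> real) \<times> (nat \<Rightarrow> real)) measure" where
  "interaction T B gam P Q = ilaw T B gam P Q T"

definition breg :: "nat \<Rightarrow> (real \<Rightarrow> real) \<Rightarrow> real \<Rightarrow> ((nat \<Rightarrow> real) \<times> (nat \<Rightarrow> real)) measure \<Rightarrow> real" where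
  "breg T f xstar L = (\<integral>\<omega>. (\<Sum>t=1..T. f (snd \<omega> t) - f xstar) \<partial>L)"

text \<open>KL(P || Q) (natural log), extended by +infinity when P is not absolutely
  continuous w.r.t. Q or the log-density is not P-integrable.\<close>
definition KL :: "'a measure \<Rightarrow> 'a measure \<Rightarrow> ennreal" where
  "KL P Q = (if absolutely_continuous Q P \<and> integrable P (entropy_density (exp 1) Q P)
             then ennreal (KL_divergence (exp 1) Q P) else \<infinity>)"

definition Delta_comp :: "nat \<Rightarrow> (nat \<Rightarrow> (nat \<Rightarrow> real \<times> real \<times> bool) \<Rightarrow> (nat \<Rightarrow> real) measure)
    \<Rightarrow> (nat \<Rightarrow> (nat \<Rightarrow> real \<times> real \<times> bool) \<Rightarrow> (nat \<Rightarrow> real) measure)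
    \<Rightarrow> ((nat \<Rightarrow> real) \<times> (nat \<Rightarrow> real)) measure \<Rightarrow> ennreal" where
  "Delta_comp T Qstar Qth L =
     (\<Sum>t=1..T. \<integral>\<^sup>+ h. KL (Qstar t h) (Qth t h) \<partial>(distr L (Hsp t) (Hmap t)))"

end

theory Submission
  imports Defs
begin

text \<open>Under a completion-sampling policy driven by a kernel \<open>Q\<close>, the action \<open>X\<^sub>t\<close> is the
  empirical quantile of a trajectory drawn from \<open>Q\<^sub>t(\<cdot> | H\<^sub>t\<^sub>-\<^sub>1)\<close>, so for bounded \<open>\<phi>\<close> the
  conditional mean of \<open>\<phi>(X\<^sub>t)\<close> given the history is the \<open>Q\<^sub>t(\<cdot> | H\<^sub>t\<^sub>-\<^sub>1)\<close>-mean of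
  \<open>\<phi> \<circ> xhat\<close>. Under the ideal policy this conditional mean of the (clipped) regret \<open>r\<^sub>t\<close> is a.s.
  the constant \<open>E r\<^sub>t\<close>; as \<open>Q\<^sub>\<theta> \<ll> Q\<^sup>\<star>\<close>, the deployed interaction law is absolutely continuous
  with respect to the ideal one, so the constant persists under the deployed law. The regret gap
  of round \<open>t\<close> is therefore the deployed-law mean over \<open>H\<^sub>t\<^sub>-\<^sub>1\<close> of the difference of the
  \<open>Q\<^sub>\<theta>\<close>- and \<open>Q\<^sup>\<star>\<close>-means of \<open>r \<circ> xhat\<close>. Donsker--Varadhan together with Hoeffding's lemma
  bounds \<open>\<lambda>\<close> times this difference by \<open>KL(Q\<^sup>\<star> \<parallel> Q\<^sub>\<theta>) + \<lambda>\<^sup>2 B'\<^sup>2 / 8\<close>; summing over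
  the rounds and optimising \<open>\<lambda>\<close> bounds the total gap by \<open>B' \<surd>(T \<Delta> / 2)\<close>, which is below the
  stated bound because \<open>ln V \<ge> 0\<close>.\<close>

section \<open>Change of measure and KL divergence\<close>

lemma nn_integral_divide_RN_deriv_le:
  fixes f :: "'a \<Rightarrow> real"
  assumes Q: "sigma_finite_measure Q" and ac: "absolutely_continuous Q P"
    and sets_eq: "sets P = sets Q" and f[measurable]: "f \<in> borel_measurable Q"
  shows "(\<integral>\<^sup>+x. ennreal (f x / enn2real (RN_deriv Q P x)) \<partial>P) \<le> (\<integral>\<^sup>+x. ennreal (f x) \<partial>Q)"
proof -
  define p where "p = RN_deriv Q P"
  have density: "density Q p = P"
    unfolding p_def by (rule sigma_finite_measure.density_RN_deriv[OF Q ac sets_eq])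
  have pointwise: "p x * ennreal (f x / enn2real (p x)) \<le> ennreal (f x)" for x
  proof (cases "p x")
    case (real q)
    then show ?thesis
      by (cases "q = 0"; cases "0 \<le> f x")
         (auto simp: ennreal_mult[symmetric] ennreal_neg divide_nonpos_pos)
  qed simp
  have "(\<integral>\<^sup>+x. ennreal (f x / enn2real (p x)) \<partial>P) = (\<integral>\<^sup>+x. p x * ennreal (f x / enn2real (p x)) \<partial>Q)"
    by (subst density[symmetric], subst nn_integral_density) (auto simp: p_def)
  also have "\<dots> \<le> (\<integral>\<^sup>+x. ennreal (f x) \<partial>Q)"
    by (intro nn_integral_mono pointwise)
  finally show ?thesis unfolding p_def .
qed

lemma KL_divergence_variational_bound:
  fixes g :: "'a \<Rightarrow> real"
  assumes P: "prob_space P" and Q: "prob_space Q" and sets_eq: "sets P = sets Q"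
    and ac: "absolutely_continuous Q P" and int: "integrable P (entropy_density (exp 1) Q P)"
    and g[measurable]: "g \<in> borel_measurable Q" and g_bound: "\<And>x. x \<in> space Q \<Longrightarrow> \<bar>g x\<bar> \<le> C"
  shows "(\<integral>x. g x \<partial>P) \<le> KL_divergence (exp 1) Q P + ln (\<integral>x. exp (g x) \<partial>Q)"
proof -
  interpret Q: prob_space Q by fact
  interpret P: prob_space P by fact
  define p where "p = RN_deriv Q P"
  define Z where "Z = (\<integral>x. exp (g x) \<partial>Q)"
  define h where "h x = exp (g x) / Z / enn2real (p x)" for x
  have [measurable]: "g \<in> borel_measurable P"
    using sets_eq by (simp cong: measurable_cong_sets)
  have "h \<in> borel_measurable Q" unfolding h_def p_def by measurable
  then have [measurable]: "h \<in> borel_measurable P"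
    using sets_eq by (simp cong: measurable_cong_sets)
  have int_g: "integrable P g"
    using g_bound by (intro P.integrable_const_bound[where B=C]) (auto simp: sets_eq_imp_space_eq[OF sets_eq])
  have int_exp_g: "integrable Q (\<lambda>x. exp (g x))"
    using g_bound by (intro Q.integrable_const_bound[where B="exp C"]) (auto simp: abs_le_iff)
  have "exp (- C) \<le> Z" unfolding Z_def
    by (rule Q.integral_ge_const[OF int_exp_g], rule AE_I2) (auto dest!: g_bound simp: abs_le_iff)
  then have Z: "0 < Z" by (meson exp_gt_zero less_le_trans)
  have "(\<integral>\<^sup>+x. ennreal (h x) \<partial>P) \<le> (\<integral>\<^sup>+x. ennreal (exp (g x) / Z) \<partial>Q)"
    unfolding h_def p_def
    by (rule nn_integral_divide_RN_deriv_le[OF Q.sigma_finite_measure_axioms ac sets_eq]) measurable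
  also have "\<dots> = ennreal (\<integral>x. exp (g x) / Z \<partial>Q)"
    using int_exp_g Z by (intro nn_integral_eq_integral AE_I2) auto
  also have "\<dots> = 1" using Z by (simp add: Z_def)
  finally have nn_h: "(\<integral>\<^sup>+x. ennreal (h x) \<partial>P) \<le> 1" .
  have h_nonneg: "0 \<le> h x" for x using Z by (simp add: h_def)
  have int_h: "integrable P h"
    by (rule integrableI_nonneg) (auto simp: h_nonneg intro: le_less_trans[OF nn_h])
  have "(\<integral>x. h x \<partial>P) = enn2real (\<integral>\<^sup>+x. ennreal (h x) \<partial>P)"
    by (rule integral_eq_nn_integral) (auto simp: h_nonneg)
  also have "\<dots> \<le> 1"
    using nn_h by (metis enn2real_1 enn2real_mono ennreal_one_less_top)
  finally have "(\<integral>x. h x \<partial>P) \<le> 1" .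
  have "AE x in Q. p x \<noteq> \<infinity>"
    unfolding p_def by (rule Q.RN_deriv_finite[OF P.sigma_finite_measure_axioms ac sets_eq])
  then have "AE x in density Q p. 0 < enn2real (p x)"
    by (subst AE_density) (auto simp: p_def enn2real_positive_iff less_top elim: AE_mp)
  then have p_pos: "AE x in P. 0 < enn2real (p x)"
    unfolding p_def Q.density_RN_deriv[OF ac sets_eq] .
  \<comment> \<open>Gibbs: integrate \<open>ln h \<le> h - 1\<close>, where \<open>h = e\<^sup>g / (Z p)\<close> has \<open>P\<close>-integral at most 1.\<close>
  have "(\<integral>x. g x - ln Z - entropy_density (exp 1) Q P x \<partial>P) \<le> (\<integral>x. h x - 1 \<partial>P)"
  proof (rule integral_mono_AE)
    show "AE x in P. g x - ln Z - entropy_density (exp 1) Q P x \<le> h x - 1"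
      using p_pos
    proof eventually_elim
      case (elim x)
      have "ln (h x) \<le> h x - 1" using elim Z by (intro ln_le_minus_one) (simp add: h_def)
      then show ?case
        using elim Z by (simp add: h_def ln_div ln_mult entropy_density_def log_def p_def)
    qed
  qed (use int_g int int_h in auto)
  also have "\<dots> \<le> 0" using \<open>(\<integral>x. h x \<partial>P) \<le> 1\<close> int_h by (simp add: P.prob_space)
  finally show ?thesis
    using int_g int by (simp add: KL_divergence_def P.prob_space Z_def)
qed

lemma KL_Hoeffding_bound:
  fixes u :: "'a \<Rightarrow> real"
  assumes P: "prob_space P" and Q: "prob_space Q" and sets_eq: "sets P = sets Q"
    and KL_finite: "KL P Q \<noteq> \<infinity>" and u[measurable]: "u \<in> borel_measurable Q"
    and u_range: "\<And>x. x \<in> space Q \<Longrightarrow> a \<le> u x \<and> u x \<le> a + c" and l: "0 < l"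
  shows "l * ((\<integral>x. u x \<partial>Q) - (\<integral>x. u x \<partial>P)) \<le> enn2real (KL P Q) + l\<^sup>2 * c\<^sup>2 / 8"
proof -
  interpret Q: prob_space Q by fact
  interpret P: prob_space P by fact
  interpret U: interval_bounded_random_variable Q "\<lambda>x. - u x" "- a - c" "- a"
    by unfold_locales (auto intro!: AE_I2 dest!: u_range)
  define g where "g x = l * ((\<integral>x. u x \<partial>Q) - u x)" for x
  have [measurable]: "g \<in> borel_measurable Q" unfolding g_def by measurable
  have ac: "absolutely_continuous Q P" and int: "integrable P (entropy_density (exp 1) Q P)"
    and KL_eq: "KL P Q = ennreal (KL_divergence (exp 1) Q P)"
    using KL_finite unfolding KL_def by (auto split: if_splits)
  have KL: "KL_divergence (exp 1) Q P \<le> enn2real (KL P Q)"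
    by (cases "0 \<le> KL_divergence (exp 1) Q P") (simp_all add: KL_eq ennreal_neg)
  have [measurable]: "u \<in> borel_measurable P"
    using sets_eq by (simp cong: measurable_cong_sets)
  have int_u: "integrable P u"
    by (intro P.integrable_const_bound[where B="\<bar>a\<bar> + \<bar>c\<bar>"])
       (auto intro!: AE_I2 dest!: u_range simp: sets_eq_imp_space_eq[OF sets_eq])
  define K where "K = l * (\<bar>\<integral>x. u x \<partial>Q\<bar> + \<bar>a\<bar> + \<bar>c\<bar>)"
  have g_bound: "\<bar>g x\<bar> \<le> K" if "x \<in> space Q" for x
  proof -
    have "\<bar>(\<integral>x. u x \<partial>Q) - u x\<bar> \<le> \<bar>\<integral>x. u x \<partial>Q\<bar> + \<bar>a\<bar> + \<bar>c\<bar>"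
      using u_range[OF that] by linarith
    then show ?thesis using l by (simp add: g_def K_def abs_mult)
  qed
  have int_exp_g: "integrable Q (\<lambda>x. exp (g x))"
    by (intro Q.integrable_const_bound[where B="exp K"])
       (auto intro!: AE_I2 dest!: g_bound simp: abs_le_iff)
  have "exp (- K) \<le> (\<integral>x. exp (g x) \<partial>Q)"
    by (rule Q.integral_ge_const[OF int_exp_g], rule AE_I2) (auto dest!: g_bound simp: abs_le_iff)
  then have exp_g_pos: "0 < (\<integral>x. exp (g x) \<partial>Q)" by (meson exp_gt_zero less_le_trans)
  have "ennreal (\<integral>x. exp (g x) \<partial>Q) = (\<integral>\<^sup>+x. exp (g x) \<partial>Q)"
    using int_exp_g by (intro nn_integral_eq_integral[symmetric]) auto
  also have "\<dots> \<le> ennreal (exp (l\<^sup>2 * c\<^sup>2 / 8))"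
    using U.Hoeffdings_lemma_nn_integral[OF l] by (simp add: g_def algebra_simps)
  finally have "(\<integral>x. exp (g x) \<partial>Q) \<le> exp (l\<^sup>2 * c\<^sup>2 / 8)"
    by (simp add: ennreal_le_iff2)
  then have "ln (\<integral>x. exp (g x) \<partial>Q) \<le> l\<^sup>2 * c\<^sup>2 / 8"
    using exp_g_pos by (metis ln_exp ln_le_cancel_iff exp_gt_zero)
  moreover have "(\<integral>x. g x \<partial>P) = l * ((\<integral>x. u x \<partial>Q) - (\<integral>x. u x \<partial>P))"
    using int_u by (simp add: g_def P.prob_space algebra_simps)
  moreover have "(\<integral>x. g x \<partial>P) \<le> KL_divergence (exp 1) Q P + ln (\<integral>x. exp (g x) \<partial>Q)"
    using g_bound by (intro KL_divergence_variational_bound[OF P Q sets_eq ac int]) (auto simp: g_def)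
  ultimately show ?thesis using KL by linarith
qed

lemma integral_le_enn2real_nn_integral:
  fixes g :: "'a \<Rightarrow> real"
  assumes int: "integrable M g" and le: "\<And>x. x \<in> space M \<Longrightarrow> ennreal (g x) \<le> K x"
    and K_finite: "(\<integral>\<^sup>+x. K x \<partial>M) \<noteq> \<infinity>"
  shows "(\<integral>x. g x \<partial>M) \<le> enn2real (\<integral>\<^sup>+x. K x \<partial>M)"
proof -
  have "(\<integral>x. g x \<partial>M) \<le> (\<integral>x. max 0 (g x) \<partial>M)"
    using int by (intro integral_mono) auto
  also have "\<dots> = enn2real (\<integral>\<^sup>+x. ennreal (g x) \<partial>M)"
    using int by (subst integral_eq_nn_integral) (auto simp: max_def ennreal_neg intro!: arg_cong[where f=enn2real] nn_integral_cong)
  also have "\<dots> \<le> enn2real (\<integral>\<^sup>+x. K x \<partial>M)"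
    using K_finite le by (intro enn2real_mono nn_integral_mono) (auto simp: top.not_eq_extremum)
  finally show ?thesis .
qed

lemma le_sqrt_of_quadratic_bounds:
  fixes X S c :: real
  assumes S: "0 \<le> S" and c: "0 < c" and bound: "\<And>l. 0 < l \<Longrightarrow> l * X \<le> S + c * l\<^sup>2"
  shows "X \<le> 2 * sqrt (c * S)"
proof (cases "S = 0")
  case True
  show ?thesis
  proof (rule ccontr)
    assume "\<not> ?thesis"
    then have X: "0 < X" using True by simp
    have "X / (2 * c) * X \<le> c * (X / (2 * c))\<^sup>2"
      using bound[of "X / (2 * c)"] X c True by simp
    then show False using X c by (simp add: power2_eq_square field_simps)
  qed
next
  case False
  define l where "l = sqrt (S / c)"
  have l: "0 < l" using S False c by (simp add: l_def)
  have "c * l\<^sup>2 = S" using S c by (simp add: l_def)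
  then have "l * X \<le> 2 * S" using bound[OF l] by simp
  then have "X \<le> 2 * S / l" using l by (simp add: field_simps)
  also have "2 * S / l = 2 * sqrt (c * S)"
    using S c False l
    by (simp add: l_def real_sqrt_divide field_simps real_sqrt_mult)
  finally show ?thesis .
qed

section \<open>Integrals and absolute continuity along kernels\<close>

lemma (in prob_space) abs_integral_le_const:
  fixes f :: "'a \<Rightarrow> real"
  assumes f[measurable]: "f \<in> borel_measurable M" and bound: "\<And>x. x \<in> space M \<Longrightarrow> \<bar>f x\<bar> \<le> C"
  shows "\<bar>\<integral>x. f x \<partial>M\<bar> \<le> C"
proof -
  have "integrable M (\<lambda>x. \<bar>f x\<bar>)"
    using bound by (intro integrable_const_bound[where B=C]) auto
  then have "(\<integral>x. \<bar>f x\<bar> \<partial>M) \<le> C"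
    using bound by (intro integral_le_const AE_I2) auto
  then show ?thesis using integral_abs_bound[of M f] by linarith
qed

lemma integral_bind_prob_algebra:
  fixes f :: "'b \<Rightarrow> real"
  assumes M: "M \<in> space (prob_algebra S)" and K: "K \<in> S \<rightarrow>\<^sub>M prob_algebra R"
    and f[measurable]: "f \<in> borel_measurable R" and bound: "\<And>y. y \<in> space R \<Longrightarrow> \<bar>f y\<bar> \<le> C"
  shows "(\<integral>y. f y \<partial>(M \<bind> K)) = (\<integral>x. (\<integral>y. f y \<partial>K x) \<partial>M)"
proof -
  have sets_M: "sets M = sets S" and "prob_space M"
    using M by (auto simp: space_prob_algebra)
  interpret prob_space M by fact
  have K_sub: "K \<in> M \<rightarrow>\<^sub>M subprob_algebra R"
    using measurable_prob_algebraD[OF K] sets_M by (simp cong: measurable_cong_sets)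
  have "AE x in M. emeasure (K x) (space (K x)) \<le> ennreal 1"
  proof (rule AE_I2)
    fix x assume "x \<in> space M"
    then have "K x \<in> space (prob_algebra R)"
      using measurable_space[OF K] sets_eq_imp_space_eq[OF sets_M] by auto
    then show "emeasure (K x) (space (K x)) \<le> ennreal 1"
      by (simp add: space_prob_algebra prob_space.emeasure_space_1)
  qed
  then show ?thesis
    by (intro integral_bind[OF f bound K_sub]) unfold_locales
qed

lemma absolutely_continuous_distr:
  assumes ac: "absolutely_continuous M N" and sets_eq: "sets N = sets M" and g: "g \<in> M \<rightarrow>\<^sub>M S"
  shows "absolutely_continuous (distr M S g) (distr N S g)"
  unfolding absolutely_continuous_def
proof
  fix A assume "A \<in> null_sets (distr M S g)"
  then have A: "A \<in> sets S" and "g -` A \<inter> space M \<in> null_sets M"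
    using null_sets_distr_iff[OF g] by auto
  then have "g -` A \<inter> space N \<in> null_sets N"
    using ac sets_eq_imp_space_eq[OF sets_eq] unfolding absolutely_continuous_def by auto
  moreover have "g \<in> N \<rightarrow>\<^sub>M S" using g sets_eq by (simp cong: measurable_cong_sets)
  ultimately show "A \<in> null_sets (distr N S g)"
    using A null_sets_distr_iff by blast
qed

lemma absolutely_continuous_bind:
  assumes M: "M \<in> space (prob_algebra S)" and N: "N \<in> space (prob_algebra S)"
    and K: "K \<in> S \<rightarrow>\<^sub>M prob_algebra R" and K': "K' \<in> S \<rightarrow>\<^sub>M prob_algebra R"
    and ac: "absolutely_continuous M N"
    and ac_K: "\<And>x. x \<in> space S \<Longrightarrow> absolutely_continuous (K x) (K' x)"
  shows "absolutely_continuous (M \<bind> K) (N \<bind> K')"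
  unfolding absolutely_continuous_def
proof
  have sets_M: "sets M = sets S" and sets_N: "sets N = sets S"
    using M N by (auto simp: space_prob_algebra)
  have K_sub: "K \<in> M \<rightarrow>\<^sub>M subprob_algebra R" and K'_sub: "K' \<in> N \<rightarrow>\<^sub>M subprob_algebra R"
    using measurable_prob_algebraD[OF K] measurable_prob_algebraD[OF K'] sets_M sets_N
    by (simp_all cong: measurable_cong_sets)
  fix A assume "A \<in> null_sets (M \<bind> K)"
  then have A: "A \<in> sets R" and "AE y in M \<bind> K. y \<notin> A"
    using sets_bind'[OF M K] AE_not_in by auto
  have pred_A: "Measurable.pred R (\<lambda>y. y \<notin> A)" using A by measurable
  have "AE x in M. AE y in K x. y \<notin> A"
    using AE_bind[OF K_sub pred_A] \<open>AE y in M \<bind> K. y \<notin> A\<close> by simp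
  then have AE_N: "AE x in N. AE y in K x. y \<notin> A"
    using ac sets_M sets_N by (intro absolutely_continuous_AE[of N M]) auto
  have "AE x in N. (AE y in K x. y \<notin> A) \<longrightarrow> (AE y in K' x. y \<notin> A)"
  proof (rule AE_I2, rule impI)
    fix x assume x: "x \<in> space N" and "AE y in K x. y \<notin> A"
    then have "x \<in> space S" using sets_eq_imp_space_eq[OF sets_N] by simp
    then have "sets (K' x) = sets (K x)"
      using measurable_space[OF K] measurable_space[OF K'] by (simp add: space_prob_algebra)
    then show "AE y in K' x. y \<notin> A"
      using ac_K[OF \<open>x \<in> space S\<close>] \<open>AE y in K x. y \<notin> A\<close> by (rule absolutely_continuous_AE)
  qed
  with AE_N have "AE x in N. AE y in K' x. y \<notin> A" by (rule AE_mp)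
  then have "AE y in N \<bind> K'. y \<notin> A"
    using AE_bind[OF K'_sub pred_A] by simp
  then show "A \<in> null_sets (N \<bind> K')"
    using A sets_bind'[OF N K'] by (simp add: AE_iff_null_sets)
qed

section \<open>Trajectory spaces and the empirical quantile\<close>

abbreviation Isp :: "nat \<Rightarrow> real \<Rightarrow> ((nat \<Rightarrow> real) \<times> (nat \<Rightarrow> real)) measure" where
  "Isp T B \<equiv> Dsp T B \<Otimes>\<^sub>M Xsp T"

lemma space_Dsp: "space (Dsp T B) = PiE {1..T} (\<lambda>_. {0..B})"
  by (simp add: Dsp_def space_PiM space_restrict_space)

lemma space_Xsp: "space (Xsp T) = PiE {1..T} (\<lambda>_. UNIV)"
  by (simp add: Xsp_def space_PiM)

lemma measurable_Dsp_component:
  assumes "s \<in> {1..T}"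
  shows "(\<lambda>d. d s) \<in> borel_measurable (Dsp T B)"
proof -
  have "(\<lambda>d. d s) \<in> Dsp T B \<rightarrow>\<^sub>M restrict_space borel {0..B}"
    unfolding Dsp_def using assms by (rule measurable_component_singleton)
  moreover have "(\<lambda>x. x) \<in> restrict_space borel {0..B} \<rightarrow>\<^sub>M (borel :: real measure)"
    by (rule measurable_restrict_space1) simp
  ultimately show ?thesis by (rule measurable_compose)
qed

lemma measurable_demand: "s \<in> {1..T} \<Longrightarrow> (\<lambda>\<omega>. fst \<omega> s) \<in> borel_measurable (Isp T B)"
  by (rule measurable_compose[OF measurable_fst measurable_Dsp_component])

lemma measurable_Xsp_component: "s \<in> {1..T} \<Longrightarrow> (\<lambda>x. x s) \<in> borel_measurable (Xsp T)"
  unfolding Xsp_def by (rule measurable_component_singleton) auto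

lemma measurable_action: "s \<in> {1..T} \<Longrightarrow> (\<lambda>\<omega>. snd \<omega> s) \<in> borel_measurable (Isp T B)"
  by (rule measurable_compose[OF measurable_snd measurable_Xsp_component])

lemma measurable_Hmap: "t \<le> Suc T \<Longrightarrow> Hmap t \<in> Isp T B \<rightarrow>\<^sub>M Hsp t"
  unfolding Hmap_def hist_def Hsp_def psi_def
proof (rule measurable_restrict)
  fix s assume "t \<le> Suc T" "s \<in> {1..<t}"
  then have "s \<in> {1..T}" by auto
  note [measurable] = measurable_demand[OF this] measurable_action[OF this]
  show "(\<lambda>\<omega>. (snd \<omega> s, min (fst \<omega> s) (snd \<omega> s), fst \<omega> s \<le> snd \<omega> s))
      \<in> Isp T B \<rightarrow>\<^sub>M borel \<Otimes>\<^sub>M borel \<Otimes>\<^sub>M count_space UNIV"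
    by measurable
qed

lemma Hmap_update_action: "t \<le> j \<Longrightarrow> Hmap t (fst \<omega>, (snd \<omega>)(j := x)) = Hmap t \<omega>"
  by (auto simp: Hmap_def hist_def)

lemma measurable_Xsp_update:
  assumes k: "k \<in> {1..T}" and f: "f \<in> N \<rightarrow>\<^sub>M Xsp T" and g: "g \<in> borel_measurable N"
  shows "(\<lambda>p. (f p)(k := g p)) \<in> N \<rightarrow>\<^sub>M Xsp T"
proof -
  have "(\<lambda>p i. ((f p)(k := g p)) i) \<in> N \<rightarrow>\<^sub>M (\<Pi>\<^sub>M s\<in>{1..T}. borel)"
  proof (rule measurable_PiM_single')
    fix i assume "i \<in> {1..T}"
    then show "(\<lambda>p. ((f p)(k := g p)) i) \<in> borel_measurable N"
      using measurable_compose[OF f measurable_Xsp_component] g by (cases "i = k") simp_all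
  next
    show "(\<lambda>p i. ((f p)(k := g p)) i) \<in> space N \<rightarrow> (\<Pi>\<^sub>E i\<in>{1..T}. space borel)"
      using measurable_space[OF f] k by (auto simp: space_Xsp PiE_def extensional_def)
  qed
  then show ?thesis by (simp only: Xsp_def)
qed

lemma measurable_update_action:
  assumes "k \<in> {1..T}"
  shows "(\<lambda>(\<omega>, x). (fst \<omega>, (snd \<omega>)(k := x))) \<in> Isp T B \<Otimes>\<^sub>M borel \<rightarrow>\<^sub>M Isp T B"
proof -
  have "(\<lambda>p. (snd (fst p))(k := snd p)) \<in> Isp T B \<Otimes>\<^sub>M borel \<rightarrow>\<^sub>M Xsp T"
    using assms by (rule measurable_Xsp_update) simp_all
  then show ?thesis by (simp add: case_prod_beta')
qed

lemma xhat_le_iff: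
  assumes T: "0 < T" and gam: "0 < gam" "gam \<le> 1"
  shows "xhat T gam d \<le> y \<longleftrightarrow> gam \<le> real (card {s\<in>{1..T}. d s \<le> y}) / real T"
proof -
  define F where "F x = real (card {s\<in>{1..T}. d s \<le> x}) / real T" for x
  define S where "S = {x. gam \<le> F x}"
  have F_mono: "F x \<le> F z" if "x \<le> z" for x z
    unfolding F_def using that by (intro divide_right_mono of_nat_mono card_mono) auto
  have attained: "\<exists>s\<in>{1..T}. d s \<le> x \<and> d s \<in> S" if x: "x \<in> S" for x
  proof -
    define m where "m = Max (d ` {s\<in>{1..T}. d s \<le> x})"
    have "{s\<in>{1..T}. d s \<le> x} \<noteq> {}"
    proof
      assume "{s\<in>{1..T}. d s \<le> x} = {}"
      then have "F x = 0" by (simp add: F_def)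
      with x gam show False by (simp add: S_def)
    qed
    then have "m \<in> d ` {s\<in>{1..T}. d s \<le> x}"
      unfolding m_def by (intro Max_in) auto
    then obtain s where s: "s \<in> {1..T}" "d s \<le> x" "d s = m" by auto
    have "{s\<in>{1..T}. d s \<le> m} = {s\<in>{1..T}. d s \<le> x}"
      using s by (auto simp: m_def intro: Max_ge)
    then have "F (d s) = F x" by (simp add: F_def s(3))
    then show ?thesis using s x by (auto simp: S_def)
  qed
  have "{s\<in>{1..T}. d s \<le> Max (d ` {1..T})} = {1..T}"
    by (auto intro: Max_ge)
  then have "Max (d ` {1..T}) \<in> S"
    using T gam by (simp add: S_def F_def)
  then obtain s0 where s0: "s0 \<in> {1..T}" "d s0 \<in> S" using attained by blast
  define q where "q = Min (d ` {s\<in>{1..T}. d s \<in> S})"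
  have "q \<in> d ` {s\<in>{1..T}. d s \<in> S}"
    unfolding q_def using s0 by (intro Min_in) auto
  then have q_in: "q \<in> S" by auto
  have S_eq: "S = {q..}"
  proof (intro antisym subsetI)
    fix x assume "x \<in> S"
    then obtain s where "s \<in> {1..T}" "d s \<le> x" "d s \<in> S" using attained by blast
    then show "x \<in> {q..}" by (auto simp: q_def intro: order.trans[OF Min_le])
  next
    fix x assume "x \<in> {q..}"
    then show "x \<in> S" using q_in F_mono[of q x] by (auto simp: S_def)
  qed
  have "xhat T gam d = q"
    unfolding xhat_def using S_eq by (simp add: S_def F_def)
  then show ?thesis using S_eq by (auto simp: S_def F_def)
qed

lemma measurable_xhat:
  assumes "0 < T" "0 < gam" "gam \<le> 1"
  shows "xhat T gam \<in> borel_measurable (Dsp T B)"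
proof (rule borel_measurable_iff_le[THEN iffD2], intro allI)
  fix y
  have [measurable]: "(\<lambda>d. \<Sum>s=1..T. of_bool (d s \<le> y) :: real) \<in> borel_measurable (Dsp T B)"
    using measurable_Dsp_component by (intro borel_measurable_sum) measurable
  have "{d \<in> space (Dsp T B). xhat T gam d \<le> y}
      = {d \<in> space (Dsp T B). gam \<le> (\<Sum>s=1..T. of_bool (d s \<le> y)) / real T}"
    by (simp add: xhat_le_iff[OF assms] Int_def)
  also have "\<dots> \<in> sets (Dsp T B)" by measurable
  finally show "{d \<in> space (Dsp T B). xhat T gam d \<le> y} \<in> sets (Dsp T B)" .
qed

lemma borel_measurable_of_action_sum:
  fixes g :: "real \<Rightarrow> real"
  assumes B: "0 \<le> B" and T: "0 < T"
    and sum: "(\<lambda>\<omega>. \<Sum>t=1..T. g (snd \<omega> t)) \<in> borel_measurable (Isp T B)"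
  shows "g \<in> borel_measurable borel"
proof -
  define e where "e y = ((\<lambda>s\<in>{1..T}. 0::real), (\<lambda>s\<in>{1..T}. if s = 1 then y else 0::real))" for y
  have "(\<lambda>y. \<lambda>s\<in>{1..T}. if s = 1 then y else 0::real) \<in> borel \<rightarrow>\<^sub>M Xsp T"
    unfolding Xsp_def by (rule measurable_restrict) simp
  then have "e \<in> borel \<rightarrow>\<^sub>M Isp T B"
    unfolding e_def using B by (intro measurable_Pair measurable_const) (auto simp: space_Dsp)
  from measurable_compose[OF this sum]
  have "(\<lambda>y. (\<Sum>t=1..T. g (snd (e y) t)) - real (T - 1) * g 0) \<in> borel_measurable borel"
    by (rule borel_measurable_diff) simp
  moreover have "(\<Sum>t=1..T. g (snd (e y) t)) = g y + real (T - 1) * g 0" for y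
  proof -
    have "(\<Sum>t=1..T. g (snd (e y) t)) = g y + (\<Sum>t=Suc 1..T. g (snd (e y) t))"
      using T by (subst sum.atLeast_Suc_atMost) (auto simp: e_def)
    also have "(\<Sum>t=Suc 1..T. g (snd (e y) t)) = (\<Sum>t=Suc 1..T. g 0)"
      by (intro sum.cong) (auto simp: e_def)
    finally show ?thesis by simp
  qed
  ultimately show ?thesis by simp
qed

text \<open>The theorem does not assume \<open>f\<close> Borel; if it is not, neither regret integrand is
  integrable and both Bochner integrals default to 0.\<close>

lemma breg_eq_0_if_not_borel:
  assumes B: "0 \<le> B" and T: "0 < T" and f: "f \<notin> borel_measurable borel"
    and sets_L: "sets L = sets (Isp T B)"
  shows "breg T f c L = 0"
proof -
  have not_borel: "(\<lambda>\<omega>. \<Sum>t=1..T. f (snd \<omega> t) - f c) \<notin> borel_measurable (Isp T B)"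
  proof
    assume "(\<lambda>\<omega>. \<Sum>t=1..T. f (snd \<omega> t) - f c) \<in> borel_measurable (Isp T B)"
    then have "(\<lambda>x. f x - f c) \<in> borel_measurable borel"
      by (rule borel_measurable_of_action_sum[where g="\<lambda>x. f x - f c", OF B T])
    then have "(\<lambda>x. (f x - f c) + f c) \<in> borel_measurable borel"
      by (rule borel_measurable_add) simp
    with f show False by simp
  qed
  have "\<not> integrable L (\<lambda>\<omega>. \<Sum>t=1..T. f (snd \<omega> t) - f c)"
  proof
    assume "integrable L (\<lambda>\<omega>. \<Sum>t=1..T. f (snd \<omega> t) - f c)"
    then have "(\<lambda>\<omega>. \<Sum>t=1..T. f (snd \<omega> t) - f c) \<in> borel_measurable L"
      by (rule borel_measurable_integrable)
    with not_borel show False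
      unfolding measurable_cong_sets[OF sets_L refl] by simp
  qed
  then show ?thesis unfolding breg_def by (rule not_integrable_integral_eq)
qed

section \<open>The interaction law of a completion-sampling policy\<close>

definition round_kernel :: "nat \<Rightarrow> real \<Rightarrow> real
    \<Rightarrow> (nat \<Rightarrow> (nat \<Rightarrow> real \<times> real \<times> bool) \<Rightarrow> (nat \<Rightarrow> real) measure) \<Rightarrow> nat
    \<Rightarrow> (nat \<Rightarrow> real) \<times> (nat \<Rightarrow> real) \<Rightarrow> ((nat \<Rightarrow> real) \<times> (nat \<Rightarrow> real)) measure" where
  "round_kernel T B gam Q j \<omega> =
     distr (act T gam Q j (Hmap j \<omega>)) (Isp T B) (\<lambda>x. (fst \<omega>, (snd \<omega>)(j := x)))"

lemma ilaw_Suc_round_kernel: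
  "ilaw T B gam P Q (Suc k) = ilaw T B gam P Q k \<bind> round_kernel T B gam Q (Suc k)"
  by (simp add: round_kernel_def[abs_def])

text \<open>The regret of a round is bounded only almost surely; its clipping to \<open>[a, a + c]\<close> is bounded
  everywhere and agrees with it almost surely.\<close>

definition clip :: "real \<Rightarrow> real \<Rightarrow> (real \<Rightarrow> real) \<Rightarrow> real \<Rightarrow> real" where
  "clip a c g x = max a (min (a + c) (g x))"

lemma clip_range: "0 \<le> c \<Longrightarrow> a \<le> clip a c g x \<and> clip a c g x \<le> a + c"
  by (auto simp: clip_def)

lemma abs_clip_le: "0 \<le> c \<Longrightarrow> \<bar>clip a c g x\<bar> \<le> \<bar>a\<bar> + c"
  by (auto simp: clip_def)

lemma clip_eq: "a \<le> g x \<Longrightarrow> g x \<le> a + c \<Longrightarrow> clip a c g x = g x"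
  by (simp add: clip_def)

lemma measurable_clip[measurable]:
  assumes [measurable]: "g \<in> borel_measurable borel"
  shows "clip a c g \<in> borel_measurable borel"
  unfolding clip_def[abs_def] by measurable

locale completion_policy =
  fixes T :: nat and B gam :: real and P :: "(nat \<Rightarrow> real) measure"
    and Q :: "nat \<Rightarrow> (nat \<Rightarrow> real \<times> real \<times> bool) \<Rightarrow> (nat \<Rightarrow> real) measure"
  assumes T_pos: "0 < T" and gam: "0 < gam" "gam \<le> 1"
    and P: "prob_space P" "sets P = sets (Dsp T B)"
    and Q: "\<And>t. t \<in> {1..T} \<Longrightarrow> Q t \<in> Hsp t \<rightarrow>\<^sub>M prob_algebra (Dsp T B)"
begin

abbreviation L :: "nat \<Rightarrow> ((nat \<Rightarrow> real) \<times> (nat \<Rightarrow> real)) measure" where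
  "L \<equiv> ilaw T B gam P Q"

lemma Hmap_space: "t \<in> {1..T} \<Longrightarrow> \<omega> \<in> space (Isp T B) \<Longrightarrow> Hmap t \<omega> \<in> space (Hsp t)"
  by (rule measurable_space[OF measurable_Hmap]) auto

lemma sets_Q: "t \<in> {1..T} \<Longrightarrow> h \<in> space (Hsp t) \<Longrightarrow> sets (Q t h) = sets (Dsp T B)"
  and prob_space_Q: "t \<in> {1..T} \<Longrightarrow> h \<in> space (Hsp t) \<Longrightarrow> prob_space (Q t h)"
  using measurable_space[OF Q] by (auto simp: space_prob_algebra)

lemma measurable_xhat_Q: "t \<in> {1..T} \<Longrightarrow> h \<in> space (Hsp t) \<Longrightarrow> xhat T gam \<in> borel_measurable (Q t h)"
  using measurable_xhat[OF T_pos gam] sets_Q by (simp cong: measurable_cong_sets)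

lemma measurable_act: "t \<in> {1..T} \<Longrightarrow> act T gam Q t \<in> Hsp t \<rightarrow>\<^sub>M prob_algebra borel"
  unfolding act_def
  by (rule measurable_compose[OF Q measurable_distr_prob_space[OF measurable_xhat[OF T_pos gam]]])

lemma sets_act: "t \<in> {1..T} \<Longrightarrow> h \<in> space (Hsp t) \<Longrightarrow> sets (act T gam Q t h) = sets borel"
  and prob_space_act: "t \<in> {1..T} \<Longrightarrow> h \<in> space (Hsp t) \<Longrightarrow> prob_space (act T gam Q t h)"
  using measurable_space[OF measurable_act] by (auto simp: space_prob_algebra)

lemma measurable_round_kernel:
  assumes "j \<in> {1..T}"
  shows "round_kernel T B gam Q j \<in> Isp T B \<rightarrow>\<^sub>M prob_algebra (Isp T B)"
  unfolding round_kernel_def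
proof (rule measurable_distr_prob_space2)
  show "(\<lambda>\<omega>. act T gam Q j (Hmap j \<omega>)) \<in> Isp T B \<rightarrow>\<^sub>M prob_algebra borel"
    using assms by (intro measurable_compose[OF measurable_Hmap measurable_act]) auto
  show "(\<lambda>(\<omega>, x). (fst \<omega>, (snd \<omega>)(j := x))) \<in> Isp T B \<Otimes>\<^sub>M borel \<rightarrow>\<^sub>M Isp T B"
    using assms by (rule measurable_update_action)
qed

lemma ilaw_prob_algebra: "k \<le> T \<Longrightarrow> L k \<in> space (prob_algebra (Isp T B))"
proof (induction k)
  case 0
  have "(\<lambda>d. (d, \<lambda>s\<in>{1..T}. 0::real)) \<in> Dsp T B \<rightarrow>\<^sub>M Isp T B"
    by (rule measurable_Pair[OF measurable_ident_sets[OF refl] measurable_const])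
       (auto simp: space_Xsp)
  then have "(\<lambda>d. (d, \<lambda>s\<in>{1..T}. 0::real)) \<in> P \<rightarrow>\<^sub>M Isp T B"
    using P(2) by (simp cong: measurable_cong_sets)
  then show ?case
    using prob_space.prob_space_distr[OF P(1)] by (simp add: space_prob_algebra)
next
  case (Suc k)
  have L: "L k \<in> space (prob_algebra (Isp T B))" using Suc by simp
  have K: "round_kernel T B gam Q (Suc k) \<in> Isp T B \<rightarrow>\<^sub>M prob_algebra (Isp T B)"
    using Suc.prems by (intro measurable_round_kernel) auto
  show ?case
    unfolding ilaw_Suc_round_kernel space_prob_algebra
    using prob_space_bind'[OF L K] sets_bind'[OF L K] by simp
qed

lemma sets_ilaw: "k \<le> T \<Longrightarrow> sets (L k) = sets (Isp T B)"
  and prob_space_ilaw: "k \<le> T \<Longrightarrow> prob_space (L k)"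
  using ilaw_prob_algebra by (auto simp: space_prob_algebra)

lemma space_ilaw: "k \<le> T \<Longrightarrow> space (L k) = space (Isp T B)"
  using sets_ilaw by (rule sets_eq_imp_space_eq)

lemma measurable_action_ilaw:
  "t \<in> {1..T} \<Longrightarrow> (\<lambda>\<omega>. snd \<omega> t) \<in> borel_measurable (L T)"
  using measurable_action sets_ilaw[of T] by (simp cong: measurable_cong_sets)

lemma measurable_Hmap_ilaw: "t \<in> {1..T} \<Longrightarrow> Hmap t \<in> L T \<rightarrow>\<^sub>M Hsp t"
  using measurable_Hmap[of t T B] sets_ilaw[of T] by (simp cong: measurable_cong_sets)

lemma integral_ilaw_Suc:
  assumes k: "Suc k \<le> T" and f[measurable]: "(f :: _ \<Rightarrow> real) \<in> borel_measurable (Isp T B)"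
    and bound: "\<And>\<omega>. \<omega> \<in> space (Isp T B) \<Longrightarrow> \<bar>f \<omega>\<bar> \<le> C"
  shows "(\<integral>\<omega>. f \<omega> \<partial>L (Suc k))
    = (\<integral>\<omega>. (\<integral>x. f (fst \<omega>, (snd \<omega>)(Suc k := x)) \<partial>act T gam Q (Suc k) (Hmap (Suc k) \<omega>)) \<partial>L k)"
proof -
  have j: "Suc k \<in> {1..T}" using k by simp
  have "(\<integral>\<omega>. f \<omega> \<partial>L (Suc k)) = (\<integral>\<omega>. (\<integral>y. f y \<partial>round_kernel T B gam Q (Suc k) \<omega>) \<partial>L k)"
    unfolding ilaw_Suc_round_kernel
    using k by (intro integral_bind_prob_algebra[OF ilaw_prob_algebra measurable_round_kernel[OF j] f bound]) auto
  also have "\<dots> = (\<integral>\<omega>. (\<integral>x. f (fst \<omega>, (snd \<omega>)(Suc k := x)) \<partial>act T gam Q (Suc k) (Hmap (Suc k) \<omega>)) \<partial>L k)"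
  proof (intro Bochner_Integration.integral_cong refl)
    fix \<omega> assume "\<omega> \<in> space (L k)"
    then have \<omega>: "\<omega> \<in> space (Isp T B)" using k by (simp add: space_ilaw)
    have "(\<lambda>x. (fst \<omega>, (snd \<omega>)(Suc k := x))) \<in> borel \<rightarrow>\<^sub>M Isp T B"
      using measurable_compose_Pair1[OF \<omega> measurable_update_action[OF j]] by simp
    then have "(\<lambda>x. (fst \<omega>, (snd \<omega>)(Suc k := x))) \<in> act T gam Q (Suc k) (Hmap (Suc k) \<omega>) \<rightarrow>\<^sub>M Isp T B"
      using sets_act[OF j Hmap_space[OF j \<omega>]] by (simp cong: measurable_cong_sets)
    then show "(\<integral>y. f y \<partial>round_kernel T B gam Q (Suc k) \<omega>)
        = (\<integral>x. f (fst \<omega>, (snd \<omega>)(Suc k := x)) \<partial>act T gam Q (Suc k) (Hmap (Suc k) \<omega>))"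
      unfolding round_kernel_def by (rule integral_distr) simp
  qed
  finally show ?thesis .
qed

lemma integral_ilaw_eq:
  assumes f[measurable]: "(f :: _ \<Rightarrow> real) \<in> borel_measurable (Isp T B)"
    and bound: "\<And>\<omega>. \<omega> \<in> space (Isp T B) \<Longrightarrow> \<bar>f \<omega>\<bar> \<le> C"
    and invariant: "\<And>\<omega> j x. \<omega> \<in> space (Isp T B) \<Longrightarrow> t < j \<Longrightarrow> j \<le> T
      \<Longrightarrow> f (fst \<omega>, (snd \<omega>)(j := x)) = f \<omega>"
    and "t \<le> m" "m \<le> T"
  shows "(\<integral>\<omega>. f \<omega> \<partial>L m) = (\<integral>\<omega>. f \<omega> \<partial>L t)"
  using \<open>t \<le> m\<close> \<open>m \<le> T\<close>
proof (induction m)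
  case (Suc m)
  show ?case
  proof (cases "t = Suc m")
    case False
    then have "t \<le> m" using Suc.prems by simp
    have j: "Suc m \<in> {1..T}" using Suc.prems by simp
    have "(\<integral>\<omega>. f \<omega> \<partial>L (Suc m))
        = (\<integral>\<omega>. (\<integral>x. f (fst \<omega>, (snd \<omega>)(Suc m := x)) \<partial>act T gam Q (Suc m) (Hmap (Suc m) \<omega>)) \<partial>L m)"
      using Suc.prems by (intro integral_ilaw_Suc[OF _ f bound])
    also have "\<dots> = (\<integral>\<omega>. f \<omega> \<partial>L m)"
    proof (intro Bochner_Integration.integral_cong refl)
      fix \<omega> assume "\<omega> \<in> space (L m)"
      then have \<omega>: "\<omega> \<in> space (Isp T B)" using Suc.prems by (simp add: space_ilaw)
      interpret prob_space "act T gam Q (Suc m) (Hmap (Suc m) \<omega>)"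
        using prob_space_act[OF j Hmap_space[OF j \<omega>]] .
      show "(\<integral>x. f (fst \<omega>, (snd \<omega>)(Suc m := x)) \<partial>act T gam Q (Suc m) (Hmap (Suc m) \<omega>)) = f \<omega>"
        using invariant[OF \<omega>] \<open>t \<le> m\<close> Suc.prems by (simp add: prob_space)
    qed
    also have "\<dots> = (\<integral>\<omega>. f \<omega> \<partial>L t)" using Suc.IH \<open>t \<le> m\<close> Suc.prems by simp
    finally show ?thesis .
  qed simp
qed simp

definition action_mean :: "nat \<Rightarrow> (real \<Rightarrow> real) \<Rightarrow> (nat \<Rightarrow> real \<times> real \<times> bool) \<Rightarrow> real" where
  "action_mean t \<phi> h = (\<integral>d. \<phi> (xhat T gam d) \<partial>Q t h)"

lemma measurable_action_mean:
  assumes t: "t \<in> {1..T}" and \<phi>[measurable]: "\<phi> \<in> borel_measurable borel"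
  shows "action_mean t \<phi> \<in> borel_measurable (Hsp t)"
proof -
  have [measurable]: "xhat T gam \<in> borel_measurable (Dsp T B)" by (rule measurable_xhat[OF T_pos gam])
  have "(\<lambda>M. \<integral>d. \<phi> (xhat T gam d) \<partial>M) \<in> subprob_algebra (Dsp T B) \<rightarrow>\<^sub>M borel"
    by (rule integral_measurable_subprob_algebra) measurable
  from measurable_compose[OF measurable_prob_algebraD[OF Q[OF t]] this]
  show ?thesis unfolding action_mean_def[abs_def] by simp
qed

lemma abs_action_mean_le:
  assumes t: "t \<in> {1..T}" and h: "h \<in> space (Hsp t)" and \<phi>[measurable]: "\<phi> \<in> borel_measurable borel"
    and bound: "\<And>x. \<bar>\<phi> x\<bar> \<le> C"
  shows "\<bar>action_mean t \<phi> h\<bar> \<le> C"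
  unfolding action_mean_def
  using measurable_xhat_Q[OF t h] bound
  by (intro prob_space.abs_integral_le_const[OF prob_space_Q[OF t h]]) auto

lemma integral_act:
  assumes t: "t \<in> {1..T}" and h: "h \<in> space (Hsp t)" and \<phi>[measurable]: "\<phi> \<in> borel_measurable borel"
  shows "(\<integral>x. \<phi> x \<partial>act T gam Q t h) = action_mean t \<phi> h"
  unfolding act_def action_mean_def using measurable_xhat_Q[OF t h] by (rule integral_distr) simp

lemma integrable_action_mean:
  assumes t: "t \<in> {1..T}"
    and \<phi>[measurable]: "\<phi> \<in> borel_measurable borel" and \<phi>_bound: "\<And>x. \<bar>\<phi> x\<bar> \<le> C"
    and M: "finite_measure M" "sets M = sets (Hsp t)"
  shows "integrable M (action_mean t \<phi>)"
proof -
  interpret finite_measure M by fact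
  show ?thesis
    using measurable_action_mean[OF t \<phi>] abs_action_mean_le[OF t _ \<phi> \<phi>_bound] M(2)
    by (intro integrable_const_bound[where B=C] AE_I2)
       (auto cong: measurable_cong_sets simp: sets_eq_imp_space_eq[OF M(2)])
qed

lemma integrable_action_mean_Hmap:
  assumes t: "t \<in> {1..T}"
    and \<phi>[measurable]: "\<phi> \<in> borel_measurable borel" and \<phi>_bound: "\<And>x. \<bar>\<phi> x\<bar> \<le> C"
    and M: "finite_measure M" "sets M = sets (Isp T B)"
  shows "integrable M (\<lambda>\<omega>. action_mean t \<phi> (Hmap t \<omega>))"
proof -
  interpret finite_measure M by fact
  have "(\<lambda>\<omega>. action_mean t \<phi> (Hmap t \<omega>)) \<in> borel_measurable (Isp T B)"
    using measurable_compose[OF measurable_Hmap measurable_action_mean[OF t \<phi>]] t by simp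
  then show ?thesis
    using abs_action_mean_le[OF t Hmap_space[OF t] \<phi> \<phi>_bound] M(2)
    by (intro integrable_const_bound[where B=C] AE_I2)
       (auto cong: measurable_cong_sets simp: sets_eq_imp_space_eq[OF M(2)])
qed

lemma integral_action_history:
  assumes t: "t \<in> {1..T}"
    and \<phi>[measurable]: "\<phi> \<in> borel_measurable borel" and \<phi>_bound: "\<And>x. \<bar>\<phi> x\<bar> \<le> C"
    and \<psi>[measurable]: "\<psi> \<in> borel_measurable (Hsp t)"
    and \<psi>_bound: "\<And>h. h \<in> space (Hsp t) \<Longrightarrow> \<bar>\<psi> h\<bar> \<le> C'"
  shows "(\<integral>\<omega>. \<phi> (snd \<omega> t) * \<psi> (Hmap t \<omega>) \<partial>L T)
    = (\<integral>\<omega>. action_mean t \<phi> (Hmap t \<omega>) * \<psi> (Hmap t \<omega>) \<partial>L T)"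
proof -
  \<comment> \<open>Rounds after \<open>t\<close> change neither \<open>X\<^sub>t\<close> nor \<open>H\<^sub>t\<^sub>-\<^sub>1\<close>; in round \<open>t\<close>, \<open>X\<^sub>t\<close> is drawn from \<open>act\<close>.\<close>
  obtain k where k: "Suc k = t" using t by (cases t) auto
  have [measurable]: "Hmap t \<in> Isp T B \<rightarrow>\<^sub>M Hsp t" using t by (intro measurable_Hmap) auto
  have [measurable]: "(\<lambda>\<omega>. snd \<omega> t) \<in> borel_measurable (Isp T B)" using t by (rule measurable_action)
  have [measurable]: "action_mean t \<phi> \<in> borel_measurable (Hsp t)" by (rule measurable_action_mean[OF t \<phi>])
  have "0 \<le> C" using order_trans[OF abs_ge_zero \<phi>_bound] .
  then have bound: "\<bar>u * \<psi> (Hmap t \<omega>)\<bar> \<le> C * C'" if "\<bar>u\<bar> \<le> C" "\<omega> \<in> space (Isp T B)" for u \<omega>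
    using that \<psi>_bound[OF Hmap_space[OF t that(2)]] by (simp add: abs_mult mult_mono)
  have "(\<integral>\<omega>. \<phi> (snd \<omega> t) * \<psi> (Hmap t \<omega>) \<partial>L T) = (\<integral>\<omega>. \<phi> (snd \<omega> t) * \<psi> (Hmap t \<omega>) \<partial>L t)"
    using t \<phi>_bound by (intro integral_ilaw_eq[where C="C * C'"] bound) (auto simp: Hmap_update_action)
  also have "\<dots> = (\<integral>\<omega>. (\<integral>x. \<phi> x * \<psi> (Hmap t \<omega>) \<partial>act T gam Q t (Hmap t \<omega>)) \<partial>L k)"
    using t \<phi>_bound
    by (subst integral_ilaw_Suc[of k, unfolded k, where C="C * C'"])
       (auto intro: bound simp: Hmap_update_action)
  also have "\<dots> = (\<integral>\<omega>. action_mean t \<phi> (Hmap t \<omega>) * \<psi> (Hmap t \<omega>) \<partial>L k)"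
  proof (intro Bochner_Integration.integral_cong refl)
    fix \<omega> assume "\<omega> \<in> space (L k)"
    then have "\<omega> \<in> space (Isp T B)" using t k by (simp add: space_ilaw)
    then show "(\<integral>x. \<phi> x * \<psi> (Hmap t \<omega>) \<partial>act T gam Q t (Hmap t \<omega>))
        = action_mean t \<phi> (Hmap t \<omega>) * \<psi> (Hmap t \<omega>)"
      using integral_act[OF t Hmap_space[OF t] \<phi>] by simp
  qed
  also have "\<dots> = (\<integral>\<omega>. action_mean t \<phi> (Hmap t \<omega>) * \<psi> (Hmap t \<omega>) \<partial>L T)"
    using t k abs_action_mean_le[OF t Hmap_space[OF t] \<phi> \<phi>_bound]
    by (intro integral_ilaw_eq[where C="C * C'", symmetric] bound) (auto simp: Hmap_update_action)
  finally show ?thesis .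
qed

lemma sigma_finite_subalgebra_history:
  assumes t: "t \<in> {1..T}"
  shows "sigma_finite_subalgebra (L T) (vimage_algebra (space (L T)) (Hmap t) (Hsp t))"
proof -
  interpret prob_space "L T" using prob_space_ilaw by simp
  have "Hmap t \<in> L T \<rightarrow>\<^sub>M Hsp t"
    using measurable_Hmap[of t T B] t sets_ilaw[of T] by (simp cong: measurable_cong_sets)
  then have "subalgebra (L T) (vimage_algebra (space (L T)) (Hmap t) (Hsp t))"
    by (auto simp: subalgebra_def sets_vimage_algebra2 measurable_def intro: measurable_sets)
  then show ?thesis
    by (intro finite_measure_subalgebra_is_sigma_finite) unfold_locales
qed

lemma real_cond_exp_action:
  assumes t: "t \<in> {1..T}"
    and \<phi>[measurable]: "\<phi> \<in> borel_measurable borel" and \<phi>_bound: "\<And>x. \<bar>\<phi> x\<bar> \<le> C"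
  shows "AE \<omega> in L T. real_cond_exp (L T) (vimage_algebra (space (L T)) (Hmap t) (Hsp t))
      (\<lambda>\<omega>. \<phi> (snd \<omega> t)) \<omega> = action_mean t \<phi> (Hmap t \<omega>)"
proof -
  define F where "F = vimage_algebra (space (L T)) (Hmap t) (Hsp t)"
  note [measurable] = measurable_action_ilaw[OF t]
  interpret sigma_finite_subalgebra "L T" F
    unfolding F_def by (rule sigma_finite_subalgebra_history[OF t])
  interpret prob_space "L T" using prob_space_ilaw by simp
  have H_fun: "Hmap t \<in> space (L T) \<rightarrow> space (Hsp t)"
    using measurable_space[OF measurable_Hmap_ilaw[OF t]] by blast
  have sets_F: "sets F = {Hmap t -` A \<inter> space (L T) | A. A \<in> sets (Hsp t)}"
    unfolding F_def by (rule sets_vimage_algebra2[OF H_fun])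
  show ?thesis unfolding F_def[symmetric]
  proof (rule real_cond_exp_charact)
    show "integrable (L T) (\<lambda>\<omega>. \<phi> (snd \<omega> t))"
      using \<phi>_bound by (intro integrable_const_bound[where B=C] AE_I2) auto
    show "integrable (L T) (\<lambda>\<omega>. action_mean t \<phi> (Hmap t \<omega>))"
      using sets_ilaw[of T] by (intro integrable_action_mean_Hmap[OF t \<phi> \<phi>_bound finite_measure_axioms]) simp
    show "(\<lambda>\<omega>. action_mean t \<phi> (Hmap t \<omega>)) \<in> borel_measurable F"
      unfolding F_def
      by (rule measurable_compose[OF measurable_vimage_algebra1[OF H_fun] measurable_action_mean[OF t \<phi>]])
  next
    fix A assume "A \<in> sets F"
    then obtain A' where A': "A' \<in> sets (Hsp t)" and A: "A = Hmap t -` A' \<inter> space (L T)"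
      using sets_F by auto
    have indicator_A: "indicator A \<omega> = (indicator A' (Hmap t \<omega>) :: real)" if "\<omega> \<in> space (L T)" for \<omega>
      using that by (simp add: A indicator_def)
    have "(\<integral>\<omega>\<in>A. \<phi> (snd \<omega> t) \<partial>L T) = (\<integral>\<omega>. \<phi> (snd \<omega> t) * indicator A' (Hmap t \<omega>) \<partial>L T)"
      unfolding set_lebesgue_integral_def
      by (intro Bochner_Integration.integral_cong) (simp_all add: indicator_A mult.commute)
    also have "\<dots> = (\<integral>\<omega>. action_mean t \<phi> (Hmap t \<omega>) * indicator A' (Hmap t \<omega>) \<partial>L T)"
      using A' by (intro integral_action_history[OF t \<phi> \<phi>_bound, where C'=1]) auto
    also have "\<dots> = (\<integral>\<omega>\<in>A. action_mean t \<phi> (Hmap t \<omega>) \<partial>L T)"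
      unfolding set_lebesgue_integral_def
      by (intro Bochner_Integration.integral_cong) (simp_all add: indicator_A mult.commute)
    finally show "(\<integral>\<omega>\<in>A. \<phi> (snd \<omega> t) \<partial>L T) = (\<integral>\<omega>\<in>A. action_mean t \<phi> (Hmap t \<omega>) \<partial>L T)" .
  qed
qed

lemma AE_action_mean_eq_integral:
  assumes t: "t \<in> {1..T}" and g[measurable]: "g \<in> borel_measurable borel" and c: "0 \<le> c"
    and range: "AE \<omega> in L T. a \<le> g (snd \<omega> t) \<and> g (snd \<omega> t) \<le> a + c"
    and cond_mean: "AE \<omega> in L T. real_cond_exp (L T) (vimage_algebra (space (L T)) (Hmap t) (Hsp t))
      (\<lambda>\<omega>. g (snd \<omega> t)) \<omega> = (\<integral>\<omega>. g (snd \<omega> t) \<partial>L T)"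
  shows "AE \<omega> in L T. action_mean t (clip a c g) (Hmap t \<omega>) = (\<integral>\<omega>. g (snd \<omega> t) \<partial>L T)"
proof -
  define F where "F = vimage_algebra (space (L T)) (Hmap t) (Hsp t)"
  note [measurable] = measurable_action_ilaw[OF t]
  interpret sigma_finite_subalgebra "L T" F
    unfolding F_def by (rule sigma_finite_subalgebra_history[OF t])
  have "AE \<omega> in L T. g (snd \<omega> t) = clip a c g (snd \<omega> t)"
    using range by eventually_elim (simp add: clip_eq)
  then have "AE \<omega> in L T. real_cond_exp (L T) F (\<lambda>\<omega>. g (snd \<omega> t)) \<omega>
      = real_cond_exp (L T) F (\<lambda>\<omega>. clip a c g (snd \<omega> t)) \<omega>"
    by (rule real_cond_exp_cong) simp_all
  moreover have "AE \<omega> in L T. real_cond_exp (L T) F (\<lambda>\<omega>. clip a c g (snd \<omega> t)) \<omega>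
      = action_mean t (clip a c g) (Hmap t \<omega>)"
    unfolding F_def using abs_clip_le[OF c] by (intro real_cond_exp_action[OF t]) auto
  ultimately show ?thesis
    using cond_mean unfolding F_def[symmetric] by eventually_elim simp
qed

lemma integral_action_clip:
  assumes t: "t \<in> {1..T}" and g[measurable]: "g \<in> borel_measurable borel" and c: "0 \<le> c"
    and range: "AE \<omega> in L T. a \<le> g (snd \<omega> t) \<and> g (snd \<omega> t) \<le> a + c"
  shows "integrable (L T) (\<lambda>\<omega>. g (snd \<omega> t))"
    and "(\<integral>\<omega>. g (snd \<omega> t) \<partial>L T) = (\<integral>\<omega>. action_mean t (clip a c g) (Hmap t \<omega>) \<partial>L T)"
proof -
  note [measurable] = measurable_action_ilaw[OF t]
  interpret prob_space "L T" using prob_space_ilaw by simp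
  have clip_AE: "AE \<omega> in L T. g (snd \<omega> t) = clip a c g (snd \<omega> t)"
    using range by eventually_elim (simp add: clip_eq)
  have "integrable (L T) (\<lambda>\<omega>. clip a c g (snd \<omega> t))"
    using t abs_clip_le[OF c] by (intro integrable_const_bound[where B="\<bar>a\<bar> + c"] AE_I2) auto
  then show "integrable (L T) (\<lambda>\<omega>. g (snd \<omega> t))"
    using integrable_cong_AE[OF _ _ clip_AE] t by simp
  have "(\<integral>\<omega>. g (snd \<omega> t) \<partial>L T) = (\<integral>\<omega>. clip a c g (snd \<omega> t) \<partial>L T)"
    using clip_AE t by (intro integral_cong_AE) auto
  also have "\<dots> = (\<integral>\<omega>. action_mean t (clip a c g) (Hmap t \<omega>) \<partial>L T)"
    using integral_action_history[where \<phi>="clip a c g" and \<psi>="\<lambda>_. 1" and C'=1,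
        OF t measurable_clip[OF g] abs_clip_le[OF c]] by simp
  finally show "(\<integral>\<omega>. g (snd \<omega> t) \<partial>L T) = (\<integral>\<omega>. action_mean t (clip a c g) (Hmap t \<omega>) \<partial>L T)" .
qed

end

section \<open>The ideal and the deployed policy\<close>

locale completion_policy_pair =
  star: completion_policy T B gam P Qstar + th: completion_policy T B gam P Qth
  for T B gam P Qstar Qth +
  assumes Qth_ac: "\<And>t h. t \<in> {1..T} \<Longrightarrow> h \<in> space (Hsp t)
    \<Longrightarrow> absolutely_continuous (Qstar t h) (Qth t h)"
begin

lemma absolutely_continuous_round_kernel:
  assumes j: "j \<in> {1..T}" and \<omega>: "\<omega> \<in> space (Isp T B)"
  shows "absolutely_continuous (round_kernel T B gam Qstar j \<omega>) (round_kernel T B gam Qth j \<omega>)"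
proof -
  have H: "Hmap j \<omega> \<in> space (Hsp j)" by (rule star.Hmap_space[OF j \<omega>])
  have "absolutely_continuous (act T gam Qstar j (Hmap j \<omega>)) (act T gam Qth j (Hmap j \<omega>))"
    unfolding act_def
    using Qth_ac[OF j H] star.sets_Q[OF j H] th.sets_Q[OF j H] star.measurable_xhat_Q[OF j H]
    by (intro absolutely_continuous_distr) auto
  moreover have "(\<lambda>x. (fst \<omega>, (snd \<omega>)(j := x))) \<in> act T gam Qstar j (Hmap j \<omega>) \<rightarrow>\<^sub>M Isp T B"
    using measurable_compose_Pair1[OF \<omega> measurable_update_action[OF j]] star.sets_act[OF j H]
    by (simp cong: measurable_cong_sets)
  ultimately show ?thesis
    unfolding round_kernel_def
    using star.sets_act[OF j H] th.sets_act[OF j H] by (intro absolutely_continuous_distr) auto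
qed

lemma absolutely_continuous_ilaw: "k \<le> T \<Longrightarrow> absolutely_continuous (star.L k) (th.L k)"
proof (induction k)
  case 0
  then show ?case by (simp add: absolutely_continuous_def)
next
  case (Suc k)
  then show ?case
    unfolding ilaw_Suc_round_kernel
    by (intro absolutely_continuous_bind[OF star.ilaw_prob_algebra th.ilaw_prob_algebra
          star.measurable_round_kernel th.measurable_round_kernel] absolutely_continuous_round_kernel)
       auto
qed

lemma integral_action_gap_eq:
  assumes t: "t \<in> {1..T}" and g[measurable]: "g \<in> borel_measurable borel" and c: "0 \<le> c"
    and range: "AE \<omega> in star.L T. a \<le> g (snd \<omega> t) \<and> g (snd \<omega> t) \<le> a + c"
    and cond_mean: "AE \<omega> in star.L T.
      real_cond_exp (star.L T) (vimage_algebra (space (star.L T)) (Hmap t) (Hsp t))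
        (\<lambda>\<omega>. g (snd \<omega> t)) \<omega> = (\<integral>\<omega>. g (snd \<omega> t) \<partial>star.L T)"
  shows "integrable (star.L T) (\<lambda>\<omega>. g (snd \<omega> t))" and "integrable (th.L T) (\<lambda>\<omega>. g (snd \<omega> t))"
    and "(\<integral>\<omega>. g (snd \<omega> t) \<partial>th.L T) - (\<integral>\<omega>. g (snd \<omega> t) \<partial>star.L T)
      = (\<integral>h. th.action_mean t (clip a c g) h - star.action_mean t (clip a c g) h
           \<partial>distr (th.L T) (Hsp t) (Hmap t))"
proof -
  let ?\<phi> = "clip a c g"
  note [measurable] = th.measurable_Hmap_ilaw[OF t]
    star.measurable_action_mean[OF t measurable_clip[OF g]] th.measurable_action_mean[OF t measurable_clip[OF g]]
  interpret th_L: prob_space "th.L T" using th.prob_space_ilaw by simp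
  have ac: "absolutely_continuous (star.L T) (th.L T)" by (rule absolutely_continuous_ilaw) simp
  have sets_eq: "sets (th.L T) = sets (star.L T)" using star.sets_ilaw th.sets_ilaw by simp
  have "AE \<omega> in th.L T. a \<le> g (snd \<omega> t) \<and> g (snd \<omega> t) \<le> a + c"
    by (rule absolutely_continuous_AE[OF sets_eq ac range])
  note th_clip = th.integral_action_clip[OF t g c this]
  note star_clip = star.integral_action_clip[OF t g c range]
  show "integrable (star.L T) (\<lambda>\<omega>. g (snd \<omega> t))" "integrable (th.L T) (\<lambda>\<omega>. g (snd \<omega> t))"
    by (fact star_clip(1) th_clip(1))+
  \<comment> \<open>The conditional mean is a.s. constant under the ideal law, hence under the deployed one.\<close>
  have "AE \<omega> in th.L T. star.action_mean t ?\<phi> (Hmap t \<omega>) = (\<integral>\<omega>. g (snd \<omega> t) \<partial>star.L T)"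
    by (rule absolutely_continuous_AE[OF sets_eq ac star.AE_action_mean_eq_integral[OF t g c range cond_mean]])
  then have star_eq: "(\<integral>\<omega>. star.action_mean t ?\<phi> (Hmap t \<omega>) \<partial>th.L T) = (\<integral>\<omega>. g (snd \<omega> t) \<partial>star.L T)"
    by (subst integral_cong_AE[where g="\<lambda>_. \<integral>\<omega>. g (snd \<omega> t) \<partial>star.L T"])
       (auto simp: th_L.prob_space)
  have "(\<integral>h. th.action_mean t ?\<phi> h - star.action_mean t ?\<phi> h \<partial>distr (th.L T) (Hsp t) (Hmap t))
      = (\<integral>\<omega>. th.action_mean t ?\<phi> (Hmap t \<omega>) - star.action_mean t ?\<phi> (Hmap t \<omega>) \<partial>th.L T)"
    by (intro integral_distr) auto
  also have "\<dots> = (\<integral>\<omega>. th.action_mean t ?\<phi> (Hmap t \<omega>) \<partial>th.L T)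
      - (\<integral>\<omega>. star.action_mean t ?\<phi> (Hmap t \<omega>) \<partial>th.L T)"
    using abs_clip_le[OF c] th.sets_ilaw
    by (intro Bochner_Integration.integral_diff th.integrable_action_mean_Hmap[OF t]
          star.integrable_action_mean_Hmap[OF t]) (auto intro: th_L.finite_measure_axioms)
  finally show "(\<integral>\<omega>. g (snd \<omega> t) \<partial>th.L T) - (\<integral>\<omega>. g (snd \<omega> t) \<partial>star.L T)
      = (\<integral>h. th.action_mean t ?\<phi> h - star.action_mean t ?\<phi> h \<partial>distr (th.L T) (Hsp t) (Hmap t))"
    using th_clip(2) star_eq by simp
qed

lemma action_mean_gap_le_KL:
  assumes t: "t \<in> {1..T}" and h: "h \<in> space (Hsp t)"
    and \<phi>[measurable]: "\<phi> \<in> borel_measurable borel" and \<phi>_range: "\<And>x. a \<le> \<phi> x \<and> \<phi> x \<le> a + c"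
    and l: "0 < l" and KL_finite: "KL (Qstar t h) (Qth t h) \<noteq> \<infinity>"
  shows "l * (th.action_mean t \<phi> h - star.action_mean t \<phi> h)
    \<le> enn2real (KL (Qstar t h) (Qth t h)) + l\<^sup>2 * c\<^sup>2 / 8"
  unfolding star.action_mean_def th.action_mean_def
  using star.sets_Q[OF t h] th.sets_Q[OF t h] th.measurable_xhat_Q[OF t h] \<phi>_range
  by (intro KL_Hoeffding_bound[OF star.prob_space_Q[OF t h] th.prob_space_Q[OF t h] _ KL_finite _ _ l])
     auto

lemma integral_action_mean_gap_le:
  assumes t: "t \<in> {1..T}" and \<mu>: "prob_space \<mu>" "sets \<mu> = sets (Hsp t)"
    and \<phi>[measurable]: "\<phi> \<in> borel_measurable borel" and \<phi>_range: "\<And>x. a \<le> \<phi> x \<and> \<phi> x \<le> a + c"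
    and l: "0 < l" and KL_finite: "(\<integral>\<^sup>+h. KL (Qstar t h) (Qth t h) \<partial>\<mu>) \<noteq> \<infinity>"
  shows "l * (\<integral>h. th.action_mean t \<phi> h - star.action_mean t \<phi> h \<partial>\<mu>)
    \<le> enn2real (\<integral>\<^sup>+h. KL (Qstar t h) (Qth t h) \<partial>\<mu>) + l\<^sup>2 * c\<^sup>2 / 8"
proof -
  interpret prob_space \<mu> by fact
  define C where "C = l\<^sup>2 * c\<^sup>2 / 8"
  define D where "D h = th.action_mean t \<phi> h - star.action_mean t \<phi> h" for h
  have space_\<mu>: "space \<mu> = space (Hsp t)" using sets_eq_imp_space_eq[OF \<mu>(2)] .
  have \<phi>_bound: "\<bar>\<phi> x\<bar> \<le> \<bar>a\<bar> + \<bar>c\<bar>" for x using \<phi>_range[of x] by auto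
  have int_D: "integrable \<mu> D"
    unfolding D_def using \<mu>(2) finite_measure_axioms
    by (intro Bochner_Integration.integrable_diff th.integrable_action_mean[OF t \<phi> \<phi>_bound]
          star.integrable_action_mean[OF t \<phi> \<phi>_bound])
  have "ennreal (l * D h - C) \<le> KL (Qstar t h) (Qth t h)" if "h \<in> space \<mu>" for h
  proof (cases "KL (Qstar t h) (Qth t h) = \<infinity>")
    case False
    have "h \<in> space (Hsp t)" using that space_\<mu> by simp
    then have "l * D h - C \<le> enn2real (KL (Qstar t h) (Qth t h))"
      using action_mean_gap_le_KL[OF t _ \<phi> \<phi>_range l False] unfolding D_def C_def by linarith
    then have "ennreal (l * D h - C) \<le> ennreal (enn2real (KL (Qstar t h) (Qth t h)))"
      by (rule ennreal_leI)
    also have "\<dots> = KL (Qstar t h) (Qth t h)"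
      using False by (simp add: top.not_eq_extremum)
    finally show ?thesis .
  qed simp
  moreover have "integrable \<mu> (\<lambda>h. l * D h - C)"
    using int_D by simp
  ultimately have "(\<integral>h. l * D h - C \<partial>\<mu>) \<le> enn2real (\<integral>\<^sup>+h. KL (Qstar t h) (Qth t h) \<partial>\<mu>)"
    using KL_finite by (intro integral_le_enn2real_nn_integral)
  moreover have "(\<integral>h. l * D h - C \<partial>\<mu>) = l * (\<integral>h. D h \<partial>\<mu>) - C"
    using int_D by (simp add: prob_space)
  ultimately show ?thesis by (simp add: D_def C_def)
qed

lemma integral_action_sum_gap_le:
  assumes g[measurable]: "g \<in> borel_measurable borel" and c: "0 \<le> c"
    and range: "\<And>t. t \<in> {1..T} \<Longrightarrow> AE \<omega> in star.L T. a t \<le> g (snd \<omega> t) \<and> g (snd \<omega> t) \<le> a t + c"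
    and cond_mean: "\<And>t. t \<in> {1..T} \<Longrightarrow> AE \<omega> in star.L T.
      real_cond_exp (star.L T) (vimage_algebra (space (star.L T)) (Hmap t) (Hsp t))
        (\<lambda>\<omega>. g (snd \<omega> t)) \<omega> = (\<integral>\<omega>. g (snd \<omega> t) \<partial>star.L T)"
    and Delta_finite: "Delta_comp T Qstar Qth (th.L T) \<noteq> \<infinity>" and l: "0 < l"
  shows "l * ((\<integral>\<omega>. (\<Sum>t=1..T. g (snd \<omega> t)) \<partial>th.L T) - (\<integral>\<omega>. (\<Sum>t=1..T. g (snd \<omega> t)) \<partial>star.L T))
    \<le> enn2real (Delta_comp T Qstar Qth (th.L T)) + real T * (l\<^sup>2 * c\<^sup>2 / 8)"
proof -
  let ?\<mu> = "\<lambda>t. distr (th.L T) (Hsp t) (Hmap t)"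
  let ?\<Delta> = "\<lambda>t. \<integral>\<^sup>+h. KL (Qstar t h) (Qth t h) \<partial>?\<mu> t"
  let ?gap = "\<lambda>t. \<integral>h. th.action_mean t (clip (a t) c g) h - star.action_mean t (clip (a t) c g) h \<partial>?\<mu> t"
  note gap = integral_action_gap_eq[OF _ g c range cond_mean]
  have \<Delta>_finite: "?\<Delta> t \<noteq> \<infinity>" if "t \<in> {1..T}" for t
    using Delta_finite member_le_sum[of t "{1..T}" ?\<Delta>] that
    by (auto simp: Delta_comp_def top_unique)
  have \<mu>: "prob_space (?\<mu> t)" if "t \<in> {1..T}" for t
    using measurable_Hmap[of t T B] that th.sets_ilaw[of T]
    by (intro prob_space.prob_space_distr th.prob_space_ilaw) (auto cong: measurable_cong_sets)
  have "(\<integral>\<omega>. (\<Sum>t=1..T. g (snd \<omega> t)) \<partial>th.L T) - (\<integral>\<omega>. (\<Sum>t=1..T. g (snd \<omega> t)) \<partial>star.L T)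
      = (\<Sum>t=1..T. (\<integral>\<omega>. g (snd \<omega> t) \<partial>th.L T) - (\<integral>\<omega>. g (snd \<omega> t) \<partial>star.L T))"
    using gap(1,2) by (simp add: Bochner_Integration.integral_sum sum_subtractf)
  also have "\<dots> = (\<Sum>t=1..T. ?gap t)"
    using gap(3) by (intro sum.cong) auto
  finally have "l * ((\<integral>\<omega>. (\<Sum>t=1..T. g (snd \<omega> t)) \<partial>th.L T) - (\<integral>\<omega>. (\<Sum>t=1..T. g (snd \<omega> t)) \<partial>star.L T))
      = (\<Sum>t=1..T. l * ?gap t)"
    by (simp add: sum_distrib_left)
  also have "\<dots> \<le> (\<Sum>t=1..T. enn2real (?\<Delta> t) + l\<^sup>2 * c\<^sup>2 / 8)"
  proof (rule sum_mono)
    fix t assume t: "t \<in> {1..T}"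
    show "l * ?gap t \<le> enn2real (?\<Delta> t) + l\<^sup>2 * c\<^sup>2 / 8"
      using clip_range[OF c]
      by (intro integral_action_mean_gap_le[where a="a t", OF t \<mu>[OF t] _ _ _ l \<Delta>_finite[OF t]]) auto
  qed
  also have "\<dots> = enn2real (Delta_comp T Qstar Qth (th.L T)) + real T * (l\<^sup>2 * c\<^sup>2 / 8)"
  proof -
    have "enn2real (Delta_comp T Qstar Qth (th.L T)) = (\<Sum>t=1..T. enn2real (?\<Delta> t))"
      unfolding Delta_comp_def using \<Delta>_finite by (subst enn2real_sum) (auto simp: less_top)
    then show ?thesis by (simp add: sum.distrib)
  qed
  finally show ?thesis .
qed

lemma breg_le_sqrt_Delta_comp:
  assumes B: "0 \<le> B" and c: "0 < c"
    and range: "\<forall>t\<in>{1..T}. \<exists>a. AE \<omega> in star.L T.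
      a \<le> f (snd \<omega> t) - f xstar \<and> f (snd \<omega> t) - f xstar \<le> a + c"
    and cond_mean: "\<forall>t\<in>{1..T}. AE \<omega> in star.L T.
      real_cond_exp (star.L T) (vimage_algebra (space (star.L T)) (Hmap t) (Hsp t))
        (\<lambda>\<omega>. f (snd \<omega> t) - f xstar) \<omega> = (\<integral>\<omega>. f (snd \<omega> t) - f xstar \<partial>star.L T)"
    and Delta_finite: "Delta_comp T Qstar Qth (th.L T) \<noteq> \<infinity>"
  shows "breg T f xstar (th.L T)
    \<le> breg T f xstar (star.L T) + c * sqrt (real T * enn2real (Delta_comp T Qstar Qth (th.L T)) / 2)"
proof (cases "f \<in> borel_measurable borel")
  case False
  then show ?thesis
    using B c star.T_pos star.sets_ilaw th.sets_ilaw by (simp add: breg_eq_0_if_not_borel)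
next
  case True
  let ?S = "enn2real (Delta_comp T Qstar Qth (th.L T))"
  obtain a where a: "\<And>t. t \<in> {1..T} \<Longrightarrow> AE \<omega> in star.L T.
      a t \<le> f (snd \<omega> t) - f xstar \<and> f (snd \<omega> t) - f xstar \<le> a t + c"
    using bchoice[OF range] by blast
  have "l * (breg T f xstar (th.L T) - breg T f xstar (star.L T)) \<le> ?S + real T * c\<^sup>2 / 8 * l\<^sup>2"
    if "0 < l" for l
    using integral_action_sum_gap_le[where g="\<lambda>x. f x - f xstar" and a=a,
        OF _ _ a cond_mean[rule_format] Delta_finite that] True c
    by (simp add: breg_def power_mult_distrib algebra_simps)
  then have "breg T f xstar (th.L T) - breg T f xstar (star.L T) \<le> 2 * sqrt (real T * c\<^sup>2 / 8 * ?S)"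
    using c star.T_pos by (intro le_sqrt_of_quadratic_bounds) auto
  also have "\<dots> = 2 * sqrt ((c / 2)\<^sup>2 * (real T * ?S / 2))"
    by (rule arg_cong[where f="\<lambda>x. 2 * sqrt x"]) (simp add: power2_eq_square field_simps)
  also have "\<dots> = c * sqrt (real T * ?S / 2)"
    using c by (simp only: real_sqrt_mult real_sqrt_abs)
  finally show ?thesis by simp
qed

end

theorem theorem2p3:
  fixes T :: nat and B hc bc gam V B' xstar :: real
    and P :: "(nat \<Rightarrow> real) measure"
    and f :: "real \<Rightarrow> real"
    and Qstar Qth :: "nat \<Rightarrow> (nat \<Rightarrow> real \<times> real \<times> bool) \<Rightarrow> (nat \<Rightarrow> real) measure"
  defines "gam \<equiv> bc / (bc + hc)"
  defines "Lstar \<equiv> interaction T B gam P Qstar"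
  defines "Lth \<equiv> interaction T B gam P Qth"
  assumes B: "0 \<le> B"
    and costs: "0 < hc" "0 < bc"
    and P: "prob_space P" "sets P = sets (Dsp T B)"
    and fstar: "\<forall>t\<in>{1..T}. \<forall>x\<in>{0..B}. (\<integral>d. loss hc bc x (d t) \<partial>P) = f x"
    and xstar: "xstar \<in> {0..B}" "\<forall>x\<in>{0..B}. f xstar \<le> f x"
    and Qstar_kernel: "\<forall>t\<in>{1..T}. Qstar t \<in> Hsp t \<rightarrow>\<^sub>M prob_algebra (Dsp T B)"
    and Qth_kernel: "\<forall>t\<in>{1..T}. Qth t \<in> Hsp t \<rightarrow>\<^sub>M prob_algebra (Dsp T B)"
    and Qstar_cond: "\<forall>L\<in>{Lstar, Lth}. \<forall>t\<in>{1..T}. \<forall>F\<in>sets (Dsp T B).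
         AE \<omega> in L. real_cond_exp L (vimage_algebra (space L) (Hmap t) (Hsp t))
                        (\<lambda>\<omega>. indicator F (fst \<omega>)) \<omega> = measure (Qstar t (Hmap t \<omega>)) F"
    and V: "1 \<le> V"
    and ac: "\<forall>t\<in>{1..T}. \<forall>h\<in>space (Hsp t). absolutely_continuous (Qstar t h) (Qth t h)"
    and ratio: "\<forall>t\<in>{1..T}. \<forall>h\<in>space (Hsp t). \<forall>F\<in>sets (Dsp T B).
         measure (Qth t h) F / measure (Qstar t h) F \<le> V"
    and cond_mean: "\<forall>t\<in>{1..T}. AE \<omega> in Lstar.
         real_cond_exp Lstar (vimage_algebra (space Lstar) (Hmap t) (Hsp t))
            (\<lambda>\<omega>. f (snd \<omega> t) - f xstar) \<omega> = (\<integral>\<omega>. f (snd \<omega> t) - f xstar \<partial>Lstar)"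
    and B': "0 < B'"
    and range: "\<forall>t\<in>{1..T}. \<exists>a. AE \<omega> in Lstar.
         a \<le> f (snd \<omega> t) - f xstar \<and> f (snd \<omega> t) - f xstar \<le> a + B'"
  shows "Delta_comp T Qstar Qth Lth \<noteq> \<infinity> \<longrightarrow>
         breg T f xstar Lth \<le> breg T f xstar Lstar
           + B' * sqrt (real T * (2 + ln V) / 2 * enn2real (Delta_comp T Qstar Qth Lth))"
proof (intro impI)
  let ?S = "enn2real (Delta_comp T Qstar Qth Lth)"
  assume Delta_finite: "Delta_comp T Qstar Qth Lth \<noteq> \<infinity>"
  have sqrt_mono: "B' * sqrt (real T * ?S / 2) \<le> B' * sqrt (real T * (2 + ln V) / 2 * ?S)"
    using B' V by (intro mult_left_mono real_sqrt_le_mono) (auto simp: field_simps)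
  show "breg T f xstar Lth \<le> breg T f xstar Lstar + B' * sqrt (real T * (2 + ln V) / 2 * ?S)"
  proof (cases "T = 0")
    case True
    then show ?thesis using B' V by (simp add: breg_def)
  next
    case False
    have gam_pos: "0 < gam" and gam_le: "gam \<le> 1"
      using costs unfolding gam_def by (simp_all add: field_simps)
    interpret completion_policy_pair T B gam P Qstar Qth
      using False gam_pos gam_le P Qstar_kernel Qth_kernel ac
      by (intro completion_policy_pair.intro completion_policy.intro completion_policy_pair_axioms.intro)
         simp_all
    have "breg T f xstar Lth \<le> breg T f xstar Lstar + B' * sqrt (real T * ?S / 2)"
      using breg_le_sqrt_Delta_comp[OF B B' range[unfolded Lstar_def interaction_def]
          cond_mean[unfolded Lstar_def interaction_def] Delta_finite[unfolded Lth_def interaction_def]]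
      unfolding Lstar_def Lth_def interaction_def .
    then show ?thesis using sqrt_mono by simp
  qed
qed

end
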